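(* Let $r$ be a positive integer. There is a constant $c=c(r)$ such that every connected $S_{1,1,1,r}$-subgraph-free graph that is not subcubic has treedepth at most $c$.
   Context: For positive integers $w,x,y,z$, $S_{w,x,y,z}$ is the tree obtained from the star $K_{1,4}$ by subdividing its four edges $w-1$, $x-1$, $y-1$ and $z-1$ times respectively (so it consists of four paths of lengths $w,x,y,z$ sharing a common endvertex, the centre). A graph $G$ is $H$-subgraph-free if $H$ is not isomorphic to any subgraph of $G$ (subgraph obtained by vertex and edge deletions). A graph is subcubic if every vertex has degree at most $3$. The treedepth of $G$ is the minimum height of a rooted forest $F$ on vertex set $V(G)$ such that for every edge $uv$ of $G$, one of $u,v$ is an ancestor of the other in $F$. *)

theory Defs
  imports Main
begin

definition simple_graph :: "'a set \<Rightarrow> ('a \<times> 'a) set \<Rightarrow> bool" where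
  "simple_graph V E \<longleftrightarrow> finite V \<and> E \<subseteq> V \<times> V \<and> sym E \<and> irrefl E"

definition graph_connected :: "'a set \<Rightarrow> ('a \<times> 'a) set \<Rightarrow> bool" where
  "graph_connected V E \<longleftrightarrow> (\<forall>u\<in>V. \<forall>v\<in>V. (u, v) \<in> E\<^sup>*)"

definition subcubic :: "'a set \<Rightarrow> ('a \<times> 'a) set \<Rightarrow> bool" where
  "subcubic V E \<longleftrightarrow> (\<forall>v\<in>V. card {u. (v, u) \<in> E} \<le> 3)"

definition has_subgraph ::
  "'b set \<Rightarrow> ('b \<times> 'b) set \<Rightarrow> 'a set \<Rightarrow> ('a \<times> 'a) set \<Rightarrow> bool" where
  "has_subgraph VH EH V E \<longleftrightarrow>
     (\<exists>f. inj_on f VH \<and> f ` VH \<subseteq> V \<and> (\<forall>(a, b)\<in>EH. (f a, f b) \<in> E))"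

text \<open>The subdivided star S_{w,x,y,z}: centre (0,0); the arm i (i = 1..4) of length
  l_i consists of the vertices (i,1),...,(i,l_i), where (i,1) is adjacent to the centre
  and (i,j) is adjacent to (i,j+1).\<close>
definition arm_len :: "nat \<Rightarrow> nat \<Rightarrow> nat \<Rightarrow> nat \<Rightarrow> nat \<Rightarrow> nat" where
  "arm_len w x y z i = (if i = 1 then w else if i = 2 then x else if i = 3 then y else z)"

definition spider_V :: "nat \<Rightarrow> nat \<Rightarrow> nat \<Rightarrow> nat \<Rightarrow> (nat \<times> nat) set" where
  "spider_V w x y z = {(0, 0)} \<union> {(i, j). i \<in> {1..4} \<and> j \<in> {1..arm_len w x y z i}}"

definition spider_E :: "nat \<Rightarrow> nat \<Rightarrow> nat \<Rightarrow> nat \<Rightarrow> ((nat \<times> nat) \<times> (nat \<times> nat)) set" where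
  "spider_E w x y z =
     (let A = {((0, 0), (i, 1)) | i. i \<in> {1..4}}
            \<union> {((i, j), (i, Suc j)) | i j. i \<in> {1..4} \<and> 1 \<le> j \<and> Suc j \<le> arm_len w x y z i}
      in A \<union> A\<inverse>)"

text \<open>Rooted forests on V are encoded by a parent map: par v = None for roots,
  par v = Some u if u is the parent of v. The ancestor relation is the reflexive transitive closure of the
  parent-to-child relation; the depth of v is the number of vertices on the path from
  the root to v, and the height of the forest is the maximum depth.\<close>
definition parent_rel :: "('a \<Rightarrow> 'a option) \<Rightarrow> ('a \<times> 'a) set" where
  "parent_rel par = {(u, v). par v = Some u}"

definition rooted_forest :: "'a set \<Rightarrow> ('a \<Rightarrow> 'a option) \<Rightarrow> bool" where
  "rooted_forest V par \<longleftrightarrow>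
     (\<forall>v\<in>V. \<forall>u. par v = Some u \<longrightarrow> u \<in> V) \<and> (\<forall>v. v \<notin> V \<longrightarrow> par v = None)
     \<and> acyclic (parent_rel par)"

definition forest_depth :: "('a \<Rightarrow> 'a option) \<Rightarrow> 'a \<Rightarrow> nat" where
  "forest_depth par v = card {u. (u, v) \<in> (parent_rel par)\<^sup>*}"

definition forest_height :: "'a set \<Rightarrow> ('a \<Rightarrow> 'a option) \<Rightarrow> nat" where
  "forest_height V par = (if V = {} then 0 else Max (forest_depth par ` V))"

definition treedepth :: "'a set \<Rightarrow> ('a \<times> 'a) set \<Rightarrow> nat" where
  "treedepth V E = (LEAST h. \<exists>par. rooted_forest V par \<and> forest_height V par = h \<and>
      (\<forall>(u, v)\<in>E. (u, v) \<in> (parent_rel par)\<^sup>* \<or> (v, u) \<in> (parent_rel par)\<^sup>*))"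

end

theory Submission
  imports Defs
begin

text \<open>Let v have degree at least 4. A path v, q_1, ..., q_m with m \<ge> r(r+2) yields
  S_{1,1,1,r}: if it meets r+3 neighbours of v, its first r+1 vertices form the long arm and three
  later neighbours the short ones; otherwise neighbours of v are so sparse along it that some
  stretch of r consecutive vertices starts with a neighbour of v and contains no other one, and
  that stretch is the long arm. In a connected graph a path with n vertices can be rerouted to
  start at v with at least n/2 vertices, so every path has fewer than 2r(r+2) vertices. Finally a
  depth-first (normal) spanning forest has all its root chains as paths and every edge joining
  an ancestor to a descendant, so its height bounds the treedepth.\<close>

section \<open>Paths\<close>

abbreviation walk :: "('a \<times> 'a) set \<Rightarrow> 'a list \<Rightarrow> bool" where
  "walk E \<equiv> successively (\<lambda>x y. (x, y) \<in> E)"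

definition graph_path :: "'a set \<Rightarrow> ('a \<times> 'a) set \<Rightarrow> 'a list \<Rightarrow> bool" where
  "graph_path V E xs \<longleftrightarrow> distinct xs \<and> set xs \<subseteq> V \<and> walk E xs"

lemma walk_take: "walk E xs \<Longrightarrow> walk E (take n xs)"
  by (simp add: successively_conv_nth)

lemma walk_drop: "walk E xs \<Longrightarrow> walk E (drop n xs)"
  unfolding successively_conv_nth
proof (intro allI impI)
  fix i
  assume "\<forall>i. Suc i < length xs \<longrightarrow> (xs ! i, xs ! Suc i) \<in> E" "Suc i < length (drop n xs)"
  then show "(drop n xs ! i, drop n xs ! Suc i) \<in> E"
    by (simp add: add.commute[of n])
qed

lemma graph_path_take: "graph_path V E xs \<Longrightarrow> graph_path V E (take n xs)"
  unfolding graph_path_def by (auto simp: walk_take dest: in_set_takeD)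

lemma graph_path_drop: "graph_path V E xs \<Longrightarrow> graph_path V E (drop n xs)"
  unfolding graph_path_def by (auto simp: walk_drop dest: in_set_dropD)

lemma graph_path_rev: "sym E \<Longrightarrow> graph_path V E xs \<Longrightarrow> graph_path V E (rev xs)"
  unfolding graph_path_def by (auto elim: successively_mono dest: symD)

lemma path_into_set:
  assumes "(v, w) \<in> E\<^sup>*" "w \<in> S" "S \<subseteq> V" "E \<subseteq> V \<times> V"
  shows "\<exists>q y. y \<in> S \<and> set q \<inter> S = {} \<and> graph_path V E (q @ [y]) \<and> hd (q @ [y]) = v"
  using assms(1)
proof (induction rule: converse_rtrancl_induct)
  case base
  then show ?case
    using assms(2,3) by (intro exI[of _ "[]"] exI[of _ w]) (auto simp: graph_path_def)
next
  case (step x z)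
  then obtain q y where qy: "y \<in> S" "set q \<inter> S = {}" "graph_path V E (q @ [y])" "hd (q @ [y]) = z"
    by blast
  have "x \<in> V"
    using step(1) assms(4) by auto
  consider "x \<in> S" | "x \<notin> S" "x \<notin> set q" | "x \<in> set q"
    by blast
  then show ?case
  proof cases
    case 1
    then show ?thesis
      using \<open>x \<in> V\<close> by (intro exI[of _ "[]"] exI[of _ x]) (auto simp: graph_path_def)
  next
    case 2
    then have "graph_path V E (x # q @ [y])"
      using qy(1,3,4) step(1) \<open>x \<in> V\<close> by (cases q) (auto simp: graph_path_def)
    then show ?thesis
      using qy(1,2) 2 by (intro exI[of _ "x # q"] exI[of _ y]) auto
  next
    case 3
    then obtain a b where "q = a @ x # b"
      by (metis split_list)
    then have "graph_path V E (x # b @ [y])"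
      using graph_path_drop[OF qy(3), of "length a"] by simp
    then show ?thesis
      using qy(1,2) \<open>q = a @ x # b\<close> by (intro exI[of _ "x # b"] exI[of _ y]) auto
  qed
qed

lemma graph_path_join:
  assumes "graph_path V E (xs @ [y])" "graph_path V E (y # ys)" "set xs \<inter> set (y # ys) = {}"
  shows "graph_path V E (xs @ y # ys)"
proof -
  have "walk E ((xs @ [y]) @ ys)"
    using assms(1,2) unfolding graph_path_def successively_append_iff
    by (cases ys) (auto simp: successively_Cons)
  then show ?thesis
    using assms unfolding graph_path_def by auto
qed

lemma long_path_from_vertex:
  assumes "E \<subseteq> V \<times> V" "sym E" "graph_connected V E" "v \<in> V" and P: "graph_path V E P"
  shows "\<exists>qs. graph_path V E (v # qs) \<and> length P \<le> 2 * length qs + 1"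
proof (cases "P = []")
  case True
  then show ?thesis
    using \<open>v \<in> V\<close> by (intro exI[of _ "[]"]) (auto simp: graph_path_def)
next
  case False
  then have "hd P \<in> V"
    using P unfolding graph_path_def by auto
  then have "(v, hd P) \<in> E\<^sup>*"
    using \<open>v \<in> V\<close> \<open>graph_connected V E\<close> unfolding graph_connected_def by blast
  then obtain q y where qy: "y \<in> set P" "set q \<inter> set P = {}" "graph_path V E (q @ [y])"
      "hd (q @ [y]) = v"
    using path_into_set[OF _ _ _ \<open>E \<subseteq> V \<times> V\<close>] P False
    unfolding graph_path_def by (metis hd_in_set)
  then obtain i where i: "i < length P" "P ! i = y"
    by (metis in_set_conv_nth)
  \<comment> \<open>continue from y along the longer of the two halves of P\<close>
  have "\<exists>H. graph_path V E (y # H) \<and> set (y # H) \<subseteq> set P \<and> length P \<le> 2 * length H + 1"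
  proof (cases "2 * i < length P")
    case True
    have "drop i P = y # drop (Suc i) P"
      using i by (metis Cons_nth_drop_Suc)
    then show ?thesis
      using graph_path_drop[OF P, of i] True set_drop_subset[of i P]
      by (intro exI[of _ "drop (Suc i) P"]) auto
  next
    case False
    have "rev (take (Suc i) P) = y # rev (take i P)"
      using i by (simp add: take_Suc_conv_app_nth)
    then show ?thesis
      using graph_path_rev[OF \<open>sym E\<close> graph_path_take[OF P, of "Suc i"]] False i(1) qy(1)
      by (intro exI[of _ "rev (take i P)"]) (auto dest: in_set_takeD)
  qed
  then obtain H where H: "graph_path V E (y # H)" "set (y # H) \<subseteq> set P"
      "length P \<le> 2 * length H + 1"
    by blast
  define qs where "qs = tl (q @ y # H)"
  have "q @ y # H = v # qs"
    using qy(4) unfolding qs_def by (cases q) auto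
  then have "graph_path V E (v # qs)"
    using graph_path_join[OF qy(3) H(1)] qy(2) H(2) by auto
  moreover have "length P \<le> 2 * length qs + 1"
    using H(3) unfolding qs_def by simp
  ultimately show ?thesis
    by blast
qed

section \<open>Spiders at a vertex of degree four\<close>

lemma has_spider_if_arm_and_three_legs:
  assumes "sym E" "E \<subseteq> V \<times> V" "r \<ge> 1"
    and arm: "graph_path V E (v # arm)" "length arm = r"
    and legs: "3 \<le> card ({u. (v, u) \<in> E} - set (v # arm))"
  shows "has_subgraph (spider_V 1 1 1 r) (spider_E 1 1 1 r) V E"
proof -
  obtain L where "L \<subseteq> {u. (v, u) \<in> E} - set (v # arm)" "card L = 3"
    using obtain_subset_with_card_n[OF legs] by blast
  then obtain a b c where abc: "distinct [a, b, c]" "{a, b, c} \<inter> set (v # arm) = {}"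
      "(v, a) \<in> E" "(v, b) \<in> E" "(v, c) \<in> E"
    by (auto simp: card_3_iff)
  define xs where "xs = v # arm"
  \<comment> \<open>the centre (0, 0) falls into the last branch and is sent to xs ! 0 = v\<close>
  define f where "f p = (if fst p = 1 then a else if fst p = 2 then b else if fst p = 3 then c
      else xs ! snd p)" for p :: "nat \<times> nat"
  have xs: "distinct xs" "set xs \<subseteq> V" "walk E xs" "length xs = Suc r" "xs ! 0 = v"
    using arm unfolding xs_def graph_path_def by auto
  have spider_V: "spider_V 1 1 1 r = {(0,0),(1,1),(2,1),(3,1)} \<union> {(4,j) | j. 1 \<le> j \<and> j \<le> r}"
    unfolding spider_V_def arm_len_def by (auto simp: le_Suc_eq numeral_eq_Suc)
  have arm_in_xs: "j \<le> r \<Longrightarrow> xs ! j \<in> set xs" for j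
    using xs by auto
  have "inj_on f (spider_V 1 1 1 r)"
    unfolding spider_V inj_on_def f_def
    using abc arm_in_xs xs unfolding xs_def[symmetric] by (auto simp: nth_eq_iff_index_eq)
  moreover have "f ` spider_V 1 1 1 r \<subseteq> V"
    unfolding spider_V f_def using abc xs arm_in_xs \<open>E \<subseteq> V \<times> V\<close> by auto
  moreover have "(f p, f q) \<in> E" if "(p, q) \<in> spider_E 1 1 1 r" for p q
  proof -
    have one_dir: "(f p, f q) \<in> E"
      if "(p, q) \<in> {((0, 0), (i, 1)) | i. i \<in> {1..4::nat}}
            \<union> {((i, j), (i, Suc j)) | i j. i \<in> {1..4} \<and> 1 \<le> j \<and> Suc j \<le> arm_len 1 1 1 r i}"
      for p q
    proof -
      have "i \<in> {1..4::nat} \<Longrightarrow> i = 1 \<or> i = 2 \<or> i = 3 \<or> i = 4" for i by auto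
      then show ?thesis
        using that abc xs successively_nth[OF xs(3)] \<open>r \<ge> 1\<close>
        unfolding f_def arm_len_def by (auto split: if_splits)
    qed
    show ?thesis
      using that one_dir[of p q] one_dir[of q p] \<open>sym E\<close>
      unfolding spider_E_def Let_def by (auto dest: symD)
  qed
  ultimately show ?thesis
    unfolding has_subgraph_def by blast
qed

lemma isolated_occurrence_window:
  assumes "distinct qs" "qs \<noteq> []" "hd qs \<in> N" "r \<ge> 1"
    and "r * card (N \<inter> set qs) \<le> length qs"
  shows "\<exists>t. hd (drop t qs) \<in> N \<and> r \<le> length (drop t qs)
     \<and> N \<inter> set (take r (drop t qs)) = {hd (drop t qs)}"
  using assms
proof (induction "length qs" arbitrary: qs rule: less_induct)
  case less
  have "hd qs \<in> N \<inter> set qs"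
    using less.prems by simp
  then have card_pos: "card (N \<inter> set qs) \<ge> 1"
    by (metis List.finite_set One_nat_def Suc_leI card_gt_0_iff emptyE finite_Int)
  show ?case
  proof (cases "N \<inter> set (take r qs) = {hd qs}")
    case True
    have "r \<le> length qs"
      using less.prems(5) card_pos by (metis le_trans mult.right_neutral mult_le_mono2)
    with True show ?thesis
      by (intro exI[of _ 0]) (simp add: less.prems(3))
  next
    case False
    \<comment> \<open>restart at a second neighbour among the first r entries; the skipped prefix is shorter
      than r, which is paid for by the neighbour dropped from the count\<close>
    have "hd qs \<in> set (take r qs)"
      using less.prems by (cases qs; cases r) auto
    then obtain y where y: "y \<in> N" "y \<in> set (take r qs)" "y \<noteq> hd qs"
      using False less.prems(3) by blast
    then obtain s where s: "s < r" "s < length qs" "qs ! s = y"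
      by (auto simp: in_set_conv_nth)
    have "0 < s"
      using s y less.prems(2) by (metis gr0I hd_conv_nth)
    define qs' where "qs' = drop s qs"
    have "hd qs \<notin> set qs'"
      using less.prems(1,2) \<open>0 < s\<close> unfolding qs'_def
      by (cases qs; cases s) (auto dest: in_set_dropD)
    then have shrink: "N \<inter> set qs' \<subseteq> (N \<inter> set qs) - {hd qs}"
      using set_drop_subset[of s qs] unfolding qs'_def by blast
    have "card (N \<inter> set qs') \<le> card (N \<inter> set qs) - 1"
      using card_mono[OF _ shrink] \<open>hd qs \<in> N \<inter> set qs\<close> by (simp add: card_Diff_singleton)
    then have "r * card (N \<inter> set qs') \<le> r * card (N \<inter> set qs) - r"
      by (metis diff_mult_distrib2 mult.right_neutral mult_le_mono2)
    also have "\<dots> \<le> length qs'"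
      using less.prems(5) s \<open>0 < s\<close> unfolding qs'_def by simp
    finally have "r * card (N \<inter> set qs') \<le> length qs'" .
    moreover have "hd qs' \<in> N" "qs' \<noteq> []" "distinct qs'" "length qs' < length qs"
      using s y \<open>0 < s\<close> less.prems(1) unfolding qs'_def by (auto simp: hd_drop_conv_nth)
    ultimately obtain t where "hd (drop t qs') \<in> N" "r \<le> length (drop t qs')"
      "N \<inter> set (take r (drop t qs')) = {hd (drop t qs')}"
      using less.hyps less.prems(4) by blast
    then show ?thesis
      unfolding qs'_def by (intro exI[of _ "s + t"]) (simp add: add.commute)
  qed
qed

lemma has_spider_if_long_path_from_high_degree_vertex:
  assumes "sym E" "irrefl E" "E \<subseteq> V \<times> V" "r \<ge> 1"
    and deg: "card {u. (v, u) \<in> E} \<ge> 4"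
    and path: "graph_path V E (v # qs)" "length qs \<ge> r * (r + 2)"
  shows "has_subgraph (spider_V 1 1 1 r) (spider_E 1 1 1 r) V E"
proof -
  define N where "N = {u. (v, u) \<in> E}"
  have "v \<notin> N"
    using \<open>irrefl E\<close> unfolding N_def irrefl_def by auto
  have "finite N"
    using deg unfolding N_def[symmetric] by (metis card.infinite not_numeral_le_zero)
  have qs: "distinct qs" "v \<notin> set qs" "v \<in> V"
    using path(1) unfolding graph_path_def by (auto simp: successively_Cons)
  have "r \<le> r * (r + 2)"
    by simp
  then have "r \<le> length qs"
    using path(2) by linarith
  then have "qs \<noteq> []"
    using \<open>r \<ge> 1\<close> by auto
  consider "card (N \<inter> set qs) \<ge> r + 3" | "card (N \<inter> set qs) \<le> r + 2"
    by linarith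
  then show ?thesis
  proof cases
    case 1
    define arm where "arm = take r qs"
    have arm: "graph_path V E (v # arm)" "length arm = r"
      using graph_path_take[OF path(1), of "Suc r"] \<open>r \<le> length qs\<close> unfolding arm_def by auto
    have "card (N \<inter> set arm) \<le> card (set arm)"
      by (simp add: card_mono)
    then have "card (N \<inter> set arm) \<le> r"
      using card_length[of arm] arm(2) by linarith
    then have "3 \<le> card (N \<inter> set qs - N \<inter> set arm)"
      using 1 diff_card_le_card_Diff[of "N \<inter> set arm" "N \<inter> set qs"] by simp
    also have "\<dots> \<le> card (N - set (v # arm))"
      using \<open>finite N\<close> \<open>v \<notin> N\<close> by (intro card_mono) auto
    finally show ?thesis
      using has_spider_if_arm_and_three_legs[OF assms(1,3,4) arm] unfolding N_def by simp
  next
    case 2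
    have "hd qs \<in> N"
      using path(1) \<open>qs \<noteq> []\<close> unfolding N_def graph_path_def by (cases qs) auto
    moreover have "r * card (N \<inter> set qs) \<le> r * (r + 2)"
      using 2 by (rule mult_le_mono2)
    then have "r * card (N \<inter> set qs) \<le> length qs"
      using path(2) by linarith
    ultimately obtain t where t: "hd (drop t qs) \<in> N" "r \<le> length (drop t qs)"
      "N \<inter> set (take r (drop t qs)) = {hd (drop t qs)}"
      using isolated_occurrence_window[OF qs(1) \<open>qs \<noteq> []\<close> _ \<open>r \<ge> 1\<close>] by blast
    define arm where "arm = take r (drop t qs)"
    have "arm \<noteq> []" "hd arm = hd (drop t qs)"
      using t(2) \<open>r \<ge> 1\<close> unfolding arm_def by auto
    then have "graph_path V E (v # arm)"
      using graph_path_take[OF graph_path_drop[OF path(1)], of r "Suc t"] t(1) qs(2,3)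
      unfolding arm_def N_def graph_path_def
      by (auto simp: successively_Cons dest: in_set_takeD in_set_dropD)
    moreover have "length arm = r"
      using t(2) unfolding arm_def by simp
    moreover have "N - set (v # arm) = N - {hd (drop t qs)}"
      using t(3) \<open>v \<notin> N\<close> unfolding arm_def by auto
    then have "3 \<le> card (N - set (v # arm))"
      using deg t(1) \<open>finite N\<close> unfolding N_def[symmetric] by (simp add: card_Diff_singleton)
    ultimately show ?thesis
      using has_spider_if_arm_and_three_legs[OF assms(1,3,4)] unfolding N_def by blast
  qed
qed

section \<open>Normal spanning forests and treedepth\<close>

lemma rtrancl_restrict_closed:
  assumes "(x, y) \<in> E\<^sup>*" "x \<in> S" "E `` S \<subseteq> S"
  shows "(x, y) \<in> (E \<inter> S \<times> S)\<^sup>* \<and> y \<in> S"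
  using assms(1)
proof (induction rule: rtrancl_induct)
  case (step y z)
  then have "z \<in> S"
    using assms(3) by blast
  then show ?case
    using step by (meson IntI SigmaI rtrancl_into_rtrancl)
qed (use assms(2) in simp)

lemma rtrancl_via_neighbour_avoiding:
  assumes "(a, x) \<in> E\<^sup>*" "x \<noteq> a" "E \<subseteq> V \<times> V"
  shows "\<exists>y. (a, y) \<in> E \<and> y \<in> V - {a} \<and> (y, x) \<in> (E \<inter> (V - {a}) \<times> (V - {a}))\<^sup>*"
  using assms(1,2)
proof (induction rule: rtrancl_induct)
  case (step y z)
  show ?case
  proof (cases "y = a")
    case True
    then show ?thesis
      using step assms(3) by auto
  next
    case False
    then obtain w where "(a, w) \<in> E" "w \<in> V - {a}" "(w, y) \<in> (E \<inter> (V - {a}) \<times> (V - {a}))\<^sup>*"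
      using step by blast
    moreover have "(y, z) \<in> E \<inter> (V - {a}) \<times> (V - {a})"
      using step(2,4) False assms(3) by auto
    ultimately show ?thesis
      by (meson rtrancl_into_rtrancl)
  qed
qed simp

lemma Image_Diff_closed:
  assumes "E \<subseteq> V \<times> V" "sym E" "E `` C \<subseteq> C"
  shows "E `` (V - C) \<subseteq> V - C"
  using assms by (auto dest: symD)

lemma reachable_within_closed:
  assumes "sym E" "E `` S \<subseteq> S" "\<forall>x\<in>S. \<exists>b\<in>A. (b, x) \<in> E\<^sup>*"
  shows "\<forall>x\<in>S. \<exists>b\<in>A \<inter> S. (b, x) \<in> (E \<inter> S \<times> S)\<^sup>*"
proof
  fix x
  assume "x \<in> S"
  then obtain b where "b \<in> A" "(b, x) \<in> E\<^sup>*"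
    using assms(3) by blast
  moreover from this have "(x, b) \<in> E\<^sup>*"
    using sym_rtrancl[OF \<open>sym E\<close>] by (auto dest: symD)
  then have "b \<in> S"
    using rtrancl_restrict_closed[OF _ \<open>x \<in> S\<close> assms(2)] by blast
  ultimately show "\<exists>b\<in>A \<inter> S. (b, x) \<in> (E \<inter> S \<times> S)\<^sup>*"
    using rtrancl_restrict_closed[OF _ _ assms(2)] by blast
qed

lemma component_reachable_from_neighbours:
  assumes "E `` C \<subseteq> C" "a \<in> C" "\<forall>x\<in>C. (a, x) \<in> E\<^sup>*"
  shows "\<forall>x\<in>C - {a}. \<exists>b\<in>{u \<in> C - {a}. (a, u) \<in> E}. (b, x) \<in> (E \<inter> (C - {a}) \<times> (C - {a}))\<^sup>*"
proof
  fix x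
  assume x: "x \<in> C - {a}"
  then have "(a, x) \<in> (E \<inter> C \<times> C)\<^sup>*"
    using assms rtrancl_restrict_closed[OF _ \<open>a \<in> C\<close> \<open>E `` C \<subseteq> C\<close>] by blast
  from rtrancl_via_neighbour_avoiding[OF this _ Int_lower2] x
  show "\<exists>b\<in>{u \<in> C - {a}. (a, u) \<in> E}. (b, x) \<in> (E \<inter> (C - {a}) \<times> (C - {a}))\<^sup>*"
    by (auto simp: Int_assoc Times_Int_Times Int_absorb1)
qed

lemma parent_rel_iff [simp]: "(u, x) \<in> parent_rel par \<longleftrightarrow> par x = Some u"
  unfolding parent_rel_def by simp

lemma rooted_forest_parentD:
  assumes "rooted_forest V par" "par x = Some u"
  shows "u \<in> V" "x \<in> V"
  using assms unfolding rooted_forest_def by (metis option.distinct(1))+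

lemma parent_rel_subset: "rooted_forest V par \<Longrightarrow> parent_rel par \<subseteq> V \<times> V"
  using rooted_forest_parentD by fastforce

lemma wf_parent_rel:
  assumes "rooted_forest V par" "finite V"
  shows "wf (parent_rel par)"
proof (rule finite_acyclic_wf)
  show "finite (parent_rel par)"
    using parent_rel_subset[OF assms(1)] assms(2) by (simp add: finite_subset)
  show "acyclic (parent_rel par)"
    using assms(1) unfolding rooted_forest_def by blast
qed

lemma rooted_forest_root_ancestor:
  assumes "rooted_forest V par" "finite V" "x \<in> V"
  shows "\<exists>r\<in>V. par r = None \<and> (r, x) \<in> (parent_rel par)\<^sup>*"
  using assms(3)
proof (induction x rule: wf_induct_rule[OF wf_parent_rel[OF assms(1,2)]])
  case (1 x)
  show ?case
  proof (cases "par x")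
    case (Some u)
    then obtain r where "r \<in> V" "par r = None" "(r, u) \<in> (parent_rel par)\<^sup>*"
      using 1(1)[of u] rooted_forest_parentD[OF assms(1) Some] by auto
    then show ?thesis
      using Some by (meson parent_rel_iff rtrancl.rtrancl_into_rtrancl)
  qed (use 1(2) in blast)
qed

definition normal_forest :: "'a set \<Rightarrow> ('a \<times> 'a) set \<Rightarrow> ('a \<Rightarrow> 'a option) \<Rightarrow> bool" where
  "normal_forest V E par \<longleftrightarrow> rooted_forest V par \<and> (\<forall>x u. par x = Some u \<longrightarrow> (u, x) \<in> E)
     \<and> (\<forall>(u, w)\<in>E. (u, w) \<in> (parent_rel par)\<^sup>* \<or> (w, u) \<in> (parent_rel par)\<^sup>*)"

lemma normal_forest_disjoint_Un:
  assumes pc: "normal_forest C EC pc" and pd: "normal_forest D ED pd"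
    and "C \<inter> D = {}" "finite C" "finite D"
  shows "normal_forest (C \<union> D) (EC \<union> ED) (\<lambda>x. if x \<in> C then pc x else pd x)"
proof -
  define par where "par = (\<lambda>x. if x \<in> C then pc x else pd x)"
  have rc: "rooted_forest C pc" and rd: "rooted_forest D pd"
    using pc pd unfolding normal_forest_def by auto
  have parent_rel: "parent_rel par = parent_rel pc \<union> parent_rel pd"
    using parent_rel_subset[OF rc] parent_rel_subset[OF rd] \<open>C \<inter> D = {}\<close>
    unfolding par_def parent_rel_def by auto
  have "Domain (parent_rel pc) \<inter> Range (parent_rel pd) = {}"
    using parent_rel_subset[OF rc] parent_rel_subset[OF rd] \<open>C \<inter> D = {}\<close> by blast
  then have "wf (parent_rel par)"
    unfolding parent_rel using wf_Un wf_parent_rel[OF rc \<open>finite C\<close>] wf_parent_rel[OF rd \<open>finite D\<close>]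
    by blast
  then have "rooted_forest (C \<union> D) par"
    using rooted_forest_parentD[OF rc] rd unfolding rooted_forest_def
    by (auto simp: par_def wf_acyclic)
  moreover have "(parent_rel pc)\<^sup>* \<subseteq> (parent_rel par)\<^sup>*" "(parent_rel pd)\<^sup>* \<subseteq> (parent_rel par)\<^sup>*"
    unfolding parent_rel by (simp_all add: rtrancl_mono)
  moreover have "par x = Some u \<Longrightarrow> (u, x) \<in> EC \<union> ED" for x u
    using pc pd unfolding normal_forest_def par_def by (auto split: if_splits)
  ultimately show ?thesis
    using pc pd unfolding normal_forest_def par_def[symmetric] by blast
qed

definition attach_roots :: "'a set \<Rightarrow> 'a \<Rightarrow> ('a \<Rightarrow> 'a option) \<Rightarrow> 'a \<Rightarrow> 'a option" where
  "attach_roots V a par x = (if x \<in> V \<and> par x = None then Some a else par x)"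

lemma parent_rel_attach_roots:
  assumes "rooted_forest V par"
  shows "parent_rel (attach_roots V a par) = {(a, x) | x. x \<in> V \<and> par x = None} \<union> parent_rel par"
proof (rule set_eqI, clarify)
  fix u x
  show "(u, x) \<in> parent_rel (attach_roots V a par)
      \<longleftrightarrow> (u, x) \<in> {(a, x) | x. x \<in> V \<and> par x = None} \<union> parent_rel par"
    using rooted_forest_parentD(2)[OF assms, of x] by (cases "par x") (auto simp: attach_roots_def)
qed

lemma rooted_forest_attach_roots:
  assumes rp: "rooted_forest V par" and "a \<notin> V" "finite V"
  shows "rooted_forest (insert a V) (attach_roots V a par)"
proof -
  define S where "S = {(a, x) | x. x \<in> V \<and> par x = None}"
  \<comment> \<open>S only leaves the new root a, so it is wellfounded\<close>
  have "wf S"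
    by (rule wf_subset[OF wf_measure[of "\<lambda>x. if x = a then 0 else 1"]])
      (use \<open>a \<notin> V\<close> in \<open>auto simp: S_def\<close>)
  moreover have "Domain S \<inter> Range (parent_rel par) = {}"
    using parent_rel_subset[OF rp] \<open>a \<notin> V\<close> unfolding S_def by blast
  ultimately have "wf (parent_rel (attach_roots V a par))"
    unfolding parent_rel_attach_roots[OF rp] S_def[symmetric]
    using wf_Un wf_parent_rel[OF rp \<open>finite V\<close>] by blast
  then show ?thesis
    using rooted_forest_parentD(1)[OF rp] rp unfolding rooted_forest_def
    by (auto simp: attach_roots_def wf_acyclic split: if_splits)
qed

lemma normal_forest_attach_roots:
  assumes p: "normal_forest V (E \<inter> V \<times> V) par" and "a \<notin> V" "finite V"
    and E: "E \<subseteq> insert a V \<times> insert a V"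
    and roots: "\<forall>x\<in>V. par x = None \<longrightarrow> (a, x) \<in> E"
  shows "normal_forest (insert a V) E (attach_roots V a par)"
proof -
  let ?R = "parent_rel (attach_roots V a par)"
  have rp: "rooted_forest V par"
    using p unfolding normal_forest_def by blast
  have mono: "(parent_rel par)\<^sup>* \<subseteq> ?R\<^sup>*"
    unfolding parent_rel_attach_roots[OF rp] by (simp add: rtrancl_mono)
  have below_a: "(a, x) \<in> ?R\<^sup>*" if "x \<in> V" for x
  proof -
    obtain r where "r \<in> V" "par r = None" "(r, x) \<in> (parent_rel par)\<^sup>*"
      using rooted_forest_root_ancestor[OF rp \<open>finite V\<close> \<open>x \<in> V\<close>] by blast
    moreover from this have "(a, r) \<in> ?R"
      by (simp add: attach_roots_def)
    ultimately show ?thesis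
      using mono by (meson converse_rtrancl_into_rtrancl subsetD)
  qed
  have "(u, x) \<in> E" if "attach_roots V a par x = Some u" for x u
    using that p roots unfolding normal_forest_def attach_roots_def by (auto split: if_splits)
  moreover have "(u, w) \<in> ?R\<^sup>* \<or> (w, u) \<in> ?R\<^sup>*" if uw: "(u, w) \<in> E" for u w
  proof -
    consider "(u, w) \<in> E \<inter> V \<times> V" | "u = a" "w \<in> insert a V" | "w = a" "u \<in> insert a V"
      using uw E by blast
    then show ?thesis
    proof cases
      case 1
      then show ?thesis
        using p mono unfolding normal_forest_def by blast
    qed (use below_a in auto)
  qed
  ultimately show ?thesis
    using rooted_forest_attach_roots[OF rp \<open>a \<notin> V\<close> \<open>finite V\<close>] unfolding normal_forest_def by blast
qed

lemma normal_forest_join_component: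
  assumes "finite V" "E \<subseteq> V \<times> V" "sym E" "a \<in> C" "C \<subseteq> V" "E `` C \<subseteq> C"
    and pc: "normal_forest (C - {a}) (E \<inter> (C - {a}) \<times> (C - {a})) pc"
      "\<forall>x\<in>C - {a}. pc x = None \<longrightarrow> (a, x) \<in> E"
    and pd: "normal_forest (V - C) (E \<inter> (V - C) \<times> (V - C)) pd"
  shows "normal_forest V E (\<lambda>x. if x \<in> C then attach_roots (C - {a}) a pc x else pd x)"
proof -
  have "E `` (V - C) \<subseteq> V - C"
    using Image_Diff_closed assms(2,3,6) by blast
  then have split_E: "E = E \<inter> C \<times> C \<union> E \<inter> (V - C) \<times> (V - C)"
    using assms(2,6) by blast
  have finite: "finite C" "finite (V - C)"
    using \<open>C \<subseteq> V\<close> \<open>finite V\<close> by (auto intro: finite_subset)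
  have "E \<inter> C \<times> C \<inter> (C - {a}) \<times> (C - {a}) = E \<inter> (C - {a}) \<times> (C - {a})"
    by blast
  then have "normal_forest (insert a (C - {a})) (E \<inter> C \<times> C) (attach_roots (C - {a}) a pc)"
    using pc finite(1) \<open>a \<in> C\<close> by (intro normal_forest_attach_roots) auto
  then have "normal_forest C (E \<inter> C \<times> C) (attach_roots (C - {a}) a pc)"
    using \<open>a \<in> C\<close> by (simp add: insert_absorb)
  from normal_forest_disjoint_Un[OF this pd _ finite]
  show ?thesis
    using \<open>C \<subseteq> V\<close> split_E[symmetric] by (simp add: Un_absorb1)
qed

lemma normal_forest_exists:
  assumes "finite V" "E \<subseteq> V \<times> V" "sym E" "A \<subseteq> V" "\<forall>x\<in>V. \<exists>b\<in>A. (b, x) \<in> E\<^sup>*"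
  shows "\<exists>par. normal_forest V E par \<and> (\<forall>x\<in>V. par x = None \<longrightarrow> x \<in> A)"
  using assms
proof (induction "card V" arbitrary: V E A rule: less_induct)
  case less
  show ?case
  proof (cases "V = {}")
    case True
    then show ?thesis
      using less.prems(2)
      by (intro exI[of _ "\<lambda>_. None"]) (auto simp: normal_forest_def rooted_forest_def parent_rel_def acyclic_def)
  next
    case False
    then obtain a where "a \<in> A" "a \<in> V"
      using less.prems(4,5) by blast
    \<comment> \<open>a normal tree of the component C of a hangs from a; the rest of V is handled separately\<close>
    define C where "C = {x \<in> V. (a, x) \<in> E\<^sup>*}"
    have "a \<in> C" "C \<subseteq> V" "finite C"
      using \<open>a \<in> V\<close> less.prems(1) unfolding C_def by auto
    have closed_C: "E `` C \<subseteq> C"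
      using less.prems(2) unfolding C_def by (auto intro: rtrancl_into_rtrancl)
    have sym_restrict: "sym (E \<inter> S \<times> S)" for S
      using less.prems(3) unfolding sym_def by blast
    obtain pc where pc: "normal_forest (C - {a}) (E \<inter> (C - {a}) \<times> (C - {a})) pc"
      "\<forall>x\<in>C - {a}. pc x = None \<longrightarrow> (a, x) \<in> E"
    proof -
      have "card (C - {a}) < card V"
        using card_Diff1_less[OF \<open>finite C\<close> \<open>a \<in> C\<close>] card_mono[OF less.prems(1) \<open>C \<subseteq> V\<close>]
        by linarith
      moreover have "\<forall>x\<in>C. (a, x) \<in> E\<^sup>*"
        unfolding C_def by blast
      ultimately show thesis
        using less.hyps[OF _ _ Int_lower2 sym_restrict, where A = "{u \<in> C - {a}. (a, u) \<in> E}"]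
          component_reachable_from_neighbours[OF closed_C \<open>a \<in> C\<close>] \<open>finite C\<close> that
        by blast
    qed
    obtain pd where pd: "normal_forest (V - C) (E \<inter> (V - C) \<times> (V - C)) pd"
      "\<forall>x\<in>V - C. pd x = None \<longrightarrow> x \<in> A"
    proof -
      have "card (V - C) < card V"
        using \<open>a \<in> C\<close> \<open>a \<in> V\<close> less.prems(1) by (metis Diff_iff Diff_subset psubsetI psubset_card_mono)
      moreover have "E `` (V - C) \<subseteq> V - C"
        using Image_Diff_closed[OF less.prems(2,3) closed_C] .
      ultimately show thesis
        using less.hyps[OF _ _ Int_lower2 sym_restrict, where A = "A \<inter> (V - C)"]
          reachable_within_closed[OF less.prems(3), of "V - C" A] less.prems(1,5) that
        by blast
    qed
    have "x \<in> A" if "x \<in> V" "(if x \<in> C then attach_roots (C - {a}) a pc x else pd x) = None" for x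
      using that pd(2) \<open>a \<in> A\<close> by (auto simp: attach_roots_def split: if_splits)
    then show ?thesis
      using normal_forest_join_component[OF less.prems(1-3) \<open>a \<in> C\<close> \<open>C \<subseteq> V\<close> closed_C pc pd(1)] by blast
  qed
qed

lemma ancestors_graph_path:
  assumes nf: "normal_forest V E par" and "finite V" "x \<in> V"
  shows "\<exists>xs. graph_path V E xs \<and> set xs = {u. (u, x) \<in> (parent_rel par)\<^sup>*}"
proof -
  have rp: "rooted_forest V par"
    using nf unfolding normal_forest_def by blast
  have "x \<in> V \<longrightarrow> (\<exists>xs. graph_path V E (xs @ [x]) \<and> set (xs @ [x]) = {u. (u, x) \<in> (parent_rel par)\<^sup>*})"
  proof (induction x rule: wf_induct_rule[OF wf_parent_rel[OF rp \<open>finite V\<close>]])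
    case (1 x)
    show ?case
    proof (cases "par x")
      case None
      then have "{u. (u, x) \<in> (parent_rel par)\<^sup>*} = {x}"
        by (auto elim: rtranclE)
      then show ?thesis
        by (intro impI exI[of _ "[]"]) (simp add: graph_path_def)
    next
      case (Some u)
      have "u \<in> V"
        using rooted_forest_parentD[OF rp Some] by simp
      with 1[of u] Some obtain xs where xs: "graph_path V E (xs @ [u])"
          "set (xs @ [u]) = {w. (w, u) \<in> (parent_rel par)\<^sup>*}"
        by auto
      have ancestors: "{w. (w, x) \<in> (parent_rel par)\<^sup>*} = insert x {w. (w, u) \<in> (parent_rel par)\<^sup>*}"
        using Some by (auto elim: rtranclE intro: rtrancl_into_rtrancl)
      have "x \<notin> set (xs @ [u])"
      proof
        assume "x \<in> set (xs @ [u])"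
        then have "(x, u) \<in> (parent_rel par)\<^sup>*"
          using xs(2) by blast
        then have "(x, x) \<in> (parent_rel par)\<^sup>+"
          using Some by (simp add: rtrancl_into_trancl1)
        then show False
          using rp unfolding rooted_forest_def acyclic_def by blast
      qed
      moreover have "graph_path V E [u, x]"
        using nf Some \<open>u \<in> V\<close> rooted_forest_parentD[OF rp Some] \<open>x \<notin> set (xs @ [u])\<close>
        unfolding normal_forest_def graph_path_def by auto
      moreover have "u \<notin> set xs"
        using xs(1) unfolding graph_path_def by simp
      ultimately have "graph_path V E ((xs @ [u]) @ [x])"
        using graph_path_join[OF xs(1), of "[x]"] by simp
      then show ?thesis
        using xs(2) ancestors by (intro impI exI[of _ "xs @ [u]"]) auto
    qed
  qed
  then show ?thesis
    using \<open>x \<in> V\<close> by blast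
qed

lemma treedepth_le_if_paths_bounded:
  assumes "finite V" "E \<subseteq> V \<times> V" "sym E" and paths: "\<And>xs. graph_path V E xs \<Longrightarrow> length xs \<le> L"
  shows "treedepth V E \<le> L"
proof -
  obtain par where par: "normal_forest V E par"
    using normal_forest_exists[OF assms(1-3) subset_refl] by blast
  have "forest_depth par x \<le> L" if "x \<in> V" for x
  proof -
    obtain xs where "graph_path V E xs" "set xs = {u. (u, x) \<in> (parent_rel par)\<^sup>*}"
      using ancestors_graph_path[OF par \<open>finite V\<close> \<open>x \<in> V\<close>] by blast
    then show ?thesis
      using paths distinct_card[of xs] unfolding forest_depth_def graph_path_def by force
  qed
  then have "forest_height V par \<le> L"
    using \<open>finite V\<close> unfolding forest_height_def by simp
  moreover have "treedepth V E \<le> forest_height V par"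
    using par unfolding treedepth_def normal_forest_def by (intro Least_le) blast
  ultimately show ?thesis
    by linarith
qed

lemma spider_free_paths_short:
  assumes "simple_graph V E" "graph_connected V E" "\<not> subcubic V E" "r \<ge> 1"
    and "\<not> has_subgraph (spider_V 1 1 1 r) (spider_E 1 1 1 r) V E"
    and P: "graph_path V E P"
  shows "length P < 2 * (r * (r + 2))"
proof -
  have E: "E \<subseteq> V \<times> V" "sym E" "irrefl E"
    using \<open>simple_graph V E\<close> unfolding simple_graph_def by auto
  obtain v where "v \<in> V" "card {u. (v, u) \<in> E} \<ge> 4"
    using \<open>\<not> subcubic V E\<close> unfolding subcubic_def by force
  moreover obtain qs where "graph_path V E (v # qs)" "length P \<le> 2 * length qs + 1"
    using long_path_from_vertex[OF E(1,2) \<open>graph_connected V E\<close> \<open>v \<in> V\<close> P] by blast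
  ultimately have "length qs < r * (r + 2)"
    using has_spider_if_long_path_from_high_degree_vertex[OF E(2,3,1) \<open>r \<ge> 1\<close>] assms(5)
    by (meson not_le)
  with \<open>length P \<le> 2 * length qs + 1\<close> show ?thesis
    by linarith
qed

theorem theorem11:
  fixes r :: nat
  assumes "r \<ge> 1"
  shows "\<exists>c::nat. \<forall>(V :: 'a set) E.
           simple_graph V E \<and> graph_connected V E \<and> \<not> subcubic V E
           \<and> \<not> has_subgraph (spider_V 1 1 1 r) (spider_E 1 1 1 r) V E
           \<longrightarrow> treedepth V E \<le> c"
proof (intro exI[of _ "2 * (r * (r + 2))"] allI impI)
  fix V :: "'a set" and E
  assume G: "simple_graph V E \<and> graph_connected V E \<and> \<not> subcubic V E
           \<and> \<not> has_subgraph (spider_V 1 1 1 r) (spider_E 1 1 1 r) V E"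
  then have "finite V" "E \<subseteq> V \<times> V" "sym E"
    unfolding simple_graph_def by auto
  moreover have "length P \<le> 2 * (r * (r + 2))" if "graph_path V E P" for P
    using spider_free_paths_short[OF _ _ _ assms _ that] G by (simp add: less_imp_le)
  ultimately show "treedepth V E \<le> 2 * (r * (r + 2))"
    by (rule treedepth_le_if_paths_bounded)
qed

end
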